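(* Let $n\geq1$ be an integer and $z\in\mathbb{C}$ with $|z|<1$. Put $p=(n+1)(1-|z|)$ and \[ m(p)=\begin{cases}(e\,p)^{-1}, & p\geq e^{-1},\\ |\log p|, & p<e^{-1}.\end{cases} \] Then $|R_n(z)|<m(p)$.
   Context: $R_n(z)=\sum_{k=n+1}^\infty \frac{z^k}{k}$, the tail of the Taylor series of $-\log(1-z)$. *)

theory Defs
  imports "HOL-Analysis.Analysis"
begin

text \<open>Tail of the Taylor series of -log(1-z): R_n(z) = sum over k > n of z^k / k.\<close>
definition R :: "nat \<Rightarrow> complex \<Rightarrow> complex" where
  "R n z = (\<Sum>j. z ^ (j + n + 1) / of_nat (j + n + 1))"

definition m_bound :: "real \<Rightarrow> real" where
  "m_bound p = (if p \<ge> exp (-1) then 1 / (exp 1 * p) else \<bar>ln p\<bar>)"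

end

theory Submission
  imports Defs
begin

text \<open>For real 0 \<le> r < 1 and N = n + 1 \<ge> 2, |R_n(z)| is at most the real tail
  T(r) = sum over k \<ge> N of r^k/k at r = |z|. Dividing r^k by N * floor(k/N) instead of k
  only increases the terms (strictly for k = N + 1), and grouping the enlarged series in
  blocks of N gives x (-ln x) / (N (1 - r)) with x = 1 - r^N; since x (-ln x) \<le> 1/e this
  yields T(r) < 1/(e p). For p < 1/e, write T(r) = -ln(1 - r) - P(r) with P the partial sum
  up to N - 1, which is increasing in r: the first bound at r0 = 1 - 1/(e N) gives
  P(r0) > ln N, hence T(r) < -ln(1 - r) - ln N = |ln p|.\<close>

definition log_tail :: "nat \<Rightarrow> real \<Rightarrow> real" where
  "log_tail N r = (\<Sum>j. r ^ (j + N) / real (j + N))"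

lemma sums_minus_ln_one_minus:
  fixes r :: real
  assumes "\<bar>r\<bar> < 1"
  shows "(\<lambda>k. r ^ k / real k) sums (- ln (1 - r))"
  using sums_minus[OF ln_series'[of "-r"]] assms by simp

lemma sums_log_tail:
  fixes r :: real
  assumes "\<bar>r\<bar> < 1"
  shows "(\<lambda>j. r ^ (j + N) / real (j + N)) sums (- ln (1 - r) - (\<Sum>k<N. r ^ k / real k))"
  using sums_split_initial_segment[OF sums_minus_ln_one_minus[OF assms], of N] by simp

lemma log_tail_eq:
  assumes "\<bar>r\<bar> < 1"
  shows "log_tail N r = - ln (1 - r) - (\<Sum>k<N. r ^ k / real k)"
  unfolding log_tail_def using sums_log_tail[OF assms] by (rule sums_unique[symmetric])

lemma mult_ln_ge_minus_exp_minus_one: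
  fixes y :: real
  assumes "0 < y"
  shows "- exp (-1) \<le> y * ln y"
proof -
  have "ln (1 / (exp 1 * y)) \<le> 1 / (exp 1 * y) - 1"
    using assms by (intro ln_le_minus_one) simp
  also have "ln (1 / (exp 1 * y)) = - 1 - ln y"
    using assms by (simp add: ln_div ln_mult)
  finally have "y * (- 1 - ln y) \<le> y * (1 / (exp 1 * y) - 1)"
    using assms by (intro mult_left_mono) auto
  also have "\<dots> = exp (-1) - y"
    using assms by (simp add: exp_minus field_simps)
  finally show ?thesis
    by (simp add: algebra_simps)
qed

lemma suminf_strict_mono:
  fixes f g :: "nat \<Rightarrow> real"
  assumes "summable f" "summable g" "\<And>n. f n \<le> g n" "f i < g i"
  shows "suminf f < suminf g"
proof -
  have "0 < (\<Sum>n. g n - f n)"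
    using assms by (intro suminf_pos2[of _ i] summable_diff) auto
  then show ?thesis
    using suminf_diff[OF assms(2,1)] by simp
qed

text \<open>N * (k div N) rounds k down to a multiple of N, so a block of N consecutive terms is a
  term of the logarithmic series in r^N times the geometric sum (1 - r^N) / (1 - r).
  For k < N the term is 0 because of division by zero.\<close>

lemma sums_power_div_rounded_index:
  fixes r :: real
  assumes r: "0 \<le> r" "r < 1" and N: "0 < N"
  shows "(\<lambda>k. r ^ k / (real N * real (k div N)))
           sums ((1 - r ^ N) * - ln (1 - r ^ N) / (real N * (1 - r)))"
proof -
  define b where "b k = r ^ k / (real N * real (k div N))" for k
  define c where "c = (1 - r ^ N) / (real N * (1 - r))"
  have "norm (b k) \<le> r ^ k" for k
  proof (cases "k div N = 0")
    case False
    then have "1 \<le> real N * real (k div N)"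
      using N by (simp add: Suc_le_eq flip: of_nat_mult)
    then show ?thesis
      using r by (simp add: b_def divide_le_eq mult_le_cancel_left1)
  qed (use r in \<open>simp add: b_def\<close>)
  then have "summable b"
    using r by (intro summable_comparison_test'[OF summable_geometric]) auto
  have block: "(\<Sum>k\<in>{j * N..<j * N + N}. b k) = (r ^ N) ^ j / real j * c" for j
  proof -
    have "(\<Sum>k\<in>{j * N..<j * N + N}. b k) = (\<Sum>i<N. b (j * N + i))"
      by (simp add: sum.atLeastLessThan_shift_0 atLeast0LessThan)
    also have "\<dots> = (\<Sum>i<N. r ^ i) * (r ^ (j * N) / (real N * real j))"
      using N by (simp add: b_def sum_distrib_right sum_divide_distrib power_add mult.commute)
    also have "\<dots> = (r ^ N) ^ j / real j * c"
      using r by (simp add: sum_gp_strict c_def power_mult mult.commute)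
    finally show ?thesis .
  qed
  have "(\<lambda>j. (r ^ N) ^ j / real j * c) sums (- ln (1 - r ^ N) * c)"
    using r N by (intro sums_mult2 sums_minus_ln_one_minus) (simp add: power_less_one_iff)
  moreover have "(\<lambda>j. (r ^ N) ^ j / real j * c) sums suminf b"
    using sums_group[OF summable_sums[OF \<open>summable b\<close>] N] by (simp add: block)
  ultimately have "suminf b = - ln (1 - r ^ N) * c"
    by (rule sums_unique2[symmetric])
  then show ?thesis
    using summable_sums[OF \<open>summable b\<close>] by (simp add: b_def[abs_def] c_def mult.commute)
qed

lemma log_tail_less:
  fixes r :: real
  assumes r: "0 \<le> r" "r < 1" and N: "2 \<le> N"
  shows "log_tail N r < exp (-1) / (real N * (1 - r))"
proof (cases "r = 0")
  case True
  then show ?thesis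
    using N by (simp add: log_tail_def power_0_left)
next
  case False
  define b where "b k = r ^ k / (real N * real (k div N))" for k
  define B where "B = (1 - r ^ N) * - ln (1 - r ^ N) / (real N * (1 - r))"
  have shifted: "(\<lambda>j. b (j + N)) sums B"
    using sums_power_div_rounded_index[OF r, of N] N
    by (subst sums_zero_iff_shift) (auto simp: b_def[abs_def] B_def)
  have le: "r ^ (j + N) / real (j + N) \<le> b (j + N)" for j
  proof -
    have "real N * real ((j + N) div N) \<le> real (j + N)"
      by (metis div_times_less_eq_dividend mult.commute of_nat_le_iff of_nat_mult)
    moreover have "0 < real N * real ((j + N) div N)"
      using N by simp
    ultimately show ?thesis
      unfolding b_def using r by (intro divide_left_mono) auto
  qed
  have less: "r ^ (1 + N) / real (1 + N) < b (1 + N)"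
  proof -
    have "(1 + N) div N = 1"
      using N by (simp only: div_add_self2) simp
    then show ?thesis
      using N r False by (simp add: b_def divide_strict_left_mono)
  qed
  have "log_tail N r < B"
    unfolding log_tail_def sums_unique[OF shifted]
    using r sums_summable[OF sums_log_tail] sums_summable[OF shifted] le less
    by (intro suminf_strict_mono[where i = 1]) auto
  also have "B \<le> exp (-1) / (real N * (1 - r))"
    unfolding B_def using r N mult_ln_ge_minus_exp_minus_one[of "1 - r ^ N"]
    by (intro divide_right_mono) (auto simp: power_less_one_iff)
  finally show ?thesis .
qed

lemma log_tail_less_minus_ln:
  fixes r :: real
  assumes r: "0 \<le> r" "r < 1" and N: "2 \<le> N" and close: "real N * (1 - r) \<le> exp (-1)"
  shows "log_tail N r < - ln (real N * (1 - r))"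
proof -
  define r0 where "r0 = 1 - exp (-1) / real N"
  define P where "P t = (\<Sum>k<N. t ^ k / real k)" for t :: real
  have "exp (-1) < real N"
    using N exp_less_one_iff[of "-1"] by linarith
  then have r0: "0 \<le> r0" "r0 < 1" "r0 \<le> r"
    using N close by (auto simp: r0_def field_simps)
  have "log_tail N r0 < 1"
    using log_tail_less[OF r0(1,2) N] N by (simp add: r0_def)
  moreover have "- ln (1 - r0) = 1 + ln (real N)"
    using N by (simp add: r0_def ln_div)
  ultimately have "ln (real N) < P r0"
    using log_tail_eq[of r0 N] r0 by (simp add: P_def)
  also have "P r0 \<le> P r"
    unfolding P_def using r0 by (intro sum_mono divide_right_mono power_mono) auto
  finally have "log_tail N r < - ln (1 - r) - ln (real N)"
    using log_tail_eq[of r N] r by (simp add: P_def)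
  also have "\<dots> = - ln (real N * (1 - r))"
    using r N by (simp add: ln_mult)
  finally show ?thesis .
qed

lemma norm_R_le_log_tail:
  assumes "norm z < 1"
  shows "norm (R n z) \<le> log_tail (n + 1) (norm z)"
proof -
  have "norm (z ^ k / of_nat k) \<le> norm z ^ k / real k" for k
    by (simp add: norm_divide norm_power)
  moreover have "summable (\<lambda>j. norm z ^ (j + (n + 1)) / real (j + (n + 1)))"
    using assms by (intro sums_summable[OF sums_log_tail]) simp
  ultimately show ?thesis
    unfolding R_def log_tail_def add.assoc by (rule norm_suminf_le)
qed

theorem proposition10:
  fixes n :: nat and z :: complex
  assumes "n \<ge> 1" and "norm z < 1"
  shows "norm (R n z) < m_bound ((real n + 1) * (1 - norm z))"
proof -
  define r where "r = norm z"
  define p where "p = (real n + 1) * (1 - r)"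
  have r: "0 \<le> r" "r < 1" and N: "2 \<le> n + 1"
    using assms by (auto simp: r_def)
  have "norm (R n z) \<le> log_tail (n + 1) r"
    unfolding r_def using assms(2) by (rule norm_R_le_log_tail)
  also have "\<dots> < m_bound p"
  proof (cases "exp (-1) \<le> p")
    case True
    then show ?thesis
      using log_tail_less[OF r N] by (simp add: m_bound_def p_def exp_minus field_simps)
  next
    case False
    have "exp (-1) < (1::real)"
      by simp
    then have "p < 1"
      using False by linarith
    moreover have "0 < p"
      using r by (simp add: p_def)
    ultimately have "m_bound p = - ln p"
      using False by (simp add: m_bound_def)
    then show ?thesis
      using log_tail_less_minus_ln[OF r N] False by (simp add: p_def add.commute)
  qed
  finally show ?thesis
    by (simp add: p_def r_def)
qed

end
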